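(* For every boosted instance $I=(G,t,t^* )$ and every boost action $B=(q,\tau)$ with $\tau\ge t^*_q$, $\mathrm{Loss}(I,B)\le\tau$.
   Context: $G=(V,E,c)$ is an undirected graph with edge costs $c\ge0$; $\delta(S)$ denotes the edges with exactly one endpoint in $S$. Shadow moat growing on $(G,s)$, for $s:V\to\mathbb{R}_{\ge0}$: continuous process in time $\tau\ge0$ maintaining a forest (initially empty), its components, and $y_S\ge0$ (initially $0$); at time $\tau$ a component $C$ is active iff some $w\in C$ has $s_w>\tau$, and each active $C$ increases $y_C$ at rate $1$; an edge $e$ between different components with $\sum_{S:e\in\delta(S)}y_S=c_e$ is added and the components merge (ties processed by a fixed rule); stop when nothing is active. A boosted instance is $I=(G,t,t^* )$ with $t,t^*:V\to\mathbb{R}_{\ge0}$ and $t^*_v\ge t_v$ for all $v$. Run shadow moat growing on $(G,t^* )$; at each moment $\tau$, each active component $C$ contributes its growth to $y_{\mathrm{base}}$ if some $w\in C$ has $t_w>\tau$, and to $y_{\mathrm{add}}$ otherwise. A boost action $B=(q,\tau)$ with $\tau\ge t^*_q$ yields $\mathrm{WithBoost}(I,B)=(G,t,t^{*\prime})$ with $t^{*\prime}_q=\tau$ and $t^{*\prime}_v=t^*_v$ otherwise. With $(y_{\mathrm{base}},y_{\mathrm{add}})$ for $I$ and $(y'_{\mathrm{base}},y'_{\mathrm{add}})$ for $\mathrm{WithBoost}(I,B)$: $\mathrm{Win}(I,B)=y_{\mathrm{base}}-y'_{\mathrm{base}}$, $\mathrm{Loss}(I,B)=y'_{\mathrm{add}}-y_{\mathrm{add}}$.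 *)

theory Defs
  imports Complex_Main
begin

text \<open>Shadow moat growing on (G,s); in addition a second threshold function t is used
  to classify the growth of an active component C at time tau as "base" (some w in C
  with t w > tau) or "add" (otherwise).  Ties are processed one edge at a time by a
  fixed selection rule pick, applied to the set of currently tight edges.\<close>

definition comp :: "'a set \<Rightarrow> 'a set set \<Rightarrow> 'a \<Rightarrow> 'a set" where
  "comp V F v = {w \<in> V. (\<lambda>a b. {a, b} \<in> F)\<^sup>*\<^sup>* v w}"

definition comps :: "'a set \<Rightarrow> 'a set set \<Rightarrow> 'a set set" where
  "comps V F = comp V F ` V"

definition in_delta :: "'a set \<Rightarrow> 'a set \<Rightarrow> bool" where
  "in_delta e S \<longleftrightarrow> card (e \<inter> S) = 1"

definition crossing :: "'a set \<Rightarrow> 'a set set \<Rightarrow> 'a set \<Rightarrow> bool" where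
  "crossing V F e \<longleftrightarrow> (\<exists>C\<in>comps V F. in_delta e C)"

definition load :: "'a set \<Rightarrow> ('a set \<Rightarrow> real) \<Rightarrow> 'a set \<Rightarrow> real" where
  "load V y e = (\<Sum>S\<in>Pow V. if in_delta e S then y S else 0)"

definition active :: "('a \<Rightarrow> real) \<Rightarrow> real \<Rightarrow> 'a set \<Rightarrow> bool" where
  "active s tau C \<longleftrightarrow> (\<exists>w\<in>C. s w > tau)"

definition tight_edges ::
  "'a set \<Rightarrow> 'a set set \<Rightarrow> ('a set \<Rightarrow> real) \<Rightarrow> 'a set set \<Rightarrow> ('a set \<Rightarrow> real) \<Rightarrow> 'a set set" where
  "tight_edges V E c F y = {e \<in> E. crossing V F e \<and> load V y e = c e}"

definition grow_rate :: "'a set \<Rightarrow> ('a \<Rightarrow> real) \<Rightarrow> 'a set set \<Rightarrow> real \<Rightarrow> 'a set \<Rightarrow> nat" where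
  "grow_rate V s F tau e = card {C \<in> comps V F. active s tau C \<and> in_delta e C}"

text \<open>candidate lengths until the next event (an activity change, a base/add change,
  or a crossing edge becoming tight)\<close>
definition events ::
  "'a set \<Rightarrow> 'a set set \<Rightarrow> ('a set \<Rightarrow> real) \<Rightarrow> ('a \<Rightarrow> real) \<Rightarrow> ('a \<Rightarrow> real)
    \<Rightarrow> 'a set set \<Rightarrow> real \<Rightarrow> ('a set \<Rightarrow> real) \<Rightarrow> real set" where
  "events V E c s t F tau y =
     {s w - tau | w. w \<in> V \<and> s w > tau}
   \<union> {t w - tau | w. w \<in> V \<and> t w > tau}
   \<union> {(c e - load V y e) / real (grow_rate V s F tau e) | e.
        e \<in> E \<and> crossing V F e \<and> grow_rate V s F tau e > 0}"

type_synonym 'a mstate = "'a set set \<times> real \<times> ('a set \<Rightarrow> real) \<times> real \<times> real"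
  \<comment> \<open>(forest, time, y, total base growth, total add growth)\<close>

inductive moat_step ::
  "'a set \<Rightarrow> 'a set set \<Rightarrow> ('a set \<Rightarrow> real) \<Rightarrow> ('a \<Rightarrow> real) \<Rightarrow> ('a \<Rightarrow> real)
    \<Rightarrow> ('a set set \<Rightarrow> 'a set) \<Rightarrow> 'a mstate \<Rightarrow> 'a mstate \<Rightarrow> bool"
  for V E c s t pick where
  merge: "tight_edges V E c F y \<noteq> {} \<Longrightarrow>
    moat_step V E c s t pick (F, tau, y, yb, ya)
      (insert (pick (tight_edges V E c F y)) F, tau, y, yb, ya)"
| grow: "tight_edges V E c F y = {} \<Longrightarrow> (\<exists>w\<in>V. s w > tau) \<Longrightarrow>
    d = Min (events V E c s t F tau y) \<Longrightarrow>
    moat_step V E c s t pick (F, tau, y, yb, ya)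
      (F, tau + d,
       (\<lambda>S. if S \<in> comps V F \<and> active s tau S then y S + d else y S),
       yb + d * real (card {C \<in> comps V F. active s tau C \<and> active t tau C}),
       ya + d * real (card {C \<in> comps V F. active s tau C \<and> \<not> active t tau C}))"

definition moat_final ::
  "'a set \<Rightarrow> 'a set set \<Rightarrow> ('a set \<Rightarrow> real) \<Rightarrow> ('a \<Rightarrow> real) \<Rightarrow> 'a mstate \<Rightarrow> bool" where
  "moat_final V E c s st = (case st of (F, tau, y, yb, ya) \<Rightarrow>
     tight_edges V E c F y = {} \<and> \<not> (\<exists>w\<in>V. s w > tau))"

definition moat_outcome ::
  "'a set \<Rightarrow> 'a set set \<Rightarrow> ('a set \<Rightarrow> real) \<Rightarrow> ('a \<Rightarrow> real) \<Rightarrow> ('a \<Rightarrow> real)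
    \<Rightarrow> ('a set set \<Rightarrow> 'a set) \<Rightarrow> real \<Rightarrow> real \<Rightarrow> bool" where
  "moat_outcome V E c s t pick yb ya \<longleftrightarrow>
     (\<exists>F tau y. (moat_step V E c s t pick)\<^sup>*\<^sup>* ({}, 0, (\<lambda>_. 0), 0, 0) (F, tau, y, yb, ya)
        \<and> moat_final V E c s (F, tau, y, yb, ya))"

end

theory Submission
  imports Defs
begin

(*
  Run shadow moat growing on the original thresholds ts and on the boosted thresholds ts(q := tau)
  in lockstep, always advancing both runs to the earlier of their next events. Raising one threshold
  only makes more moats active, so at every common time each original moat lies inside a boosted moat
  and every edge crossing the boosted forest carries at least its original load; hence an edge that
  becomes tight in the original run is tight or already contracted in the boosted run, and this coupling
  survives all merges. A boosted moat growing into y_add that has a vertex w with ts w above the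
  current time contains the original moat of w, which grows into y_add as well, and different boosted
  moats contain different original ones. Otherwise only q keeps it active, which is possible only
  before time tau. So the boosted y_add grows at most one unit per unit of time faster than the
  original one before tau and not faster afterwards.
*)

section \<open>Connectivity in a forest\<close>

definition linked :: "'a set set \<Rightarrow> 'a \<Rightarrow> 'a \<Rightarrow> bool" where
  "linked F = (\<lambda>a b. {a, b} \<in> F)\<^sup>*\<^sup>*"

lemma linked_refl [simp]: "linked F u u"
  by (simp add: linked_def)

lemma linked_sym: "linked F u v \<Longrightarrow> linked F v u"
  unfolding linked_def
proof (induction rule: rtranclp_induct)
  case (step v w)
  then have "{w, v} \<in> F" by (simp add: insert_commute)
  then show ?case using step(3) by (rule converse_rtranclp_into_rtranclp[where r = "\<lambda>a b. {a, b} \<in> F"])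
qed simp

lemma linked_trans: "linked F u v \<Longrightarrow> linked F v w \<Longrightarrow> linked F u w"
  unfolding linked_def by (rule rtranclp_trans)

lemma linked_edge: "{a, b} \<in> F \<Longrightarrow> linked F a b"
  unfolding linked_def by auto

lemma linked_mono: "F \<subseteq> G \<Longrightarrow> linked F u v \<Longrightarrow> linked G u v"
  unfolding linked_def by (erule rtranclp_mono[THEN predicate2D, rotated]) auto

lemma linked_if_edges_linked:
  assumes "\<And>a b. {a, b} \<in> F \<Longrightarrow> linked G a b" and "linked F u v"
  shows "linked G u v"
  using assms(2) unfolding linked_def[of F]
  by (induction rule: rtranclp_induct) (auto intro: linked_trans assms(1))

lemma comp_linked: "comp V F u = {w \<in> V. linked F u w}"
  by (simp add: comp_def linked_def)

lemma in_comp_iff: "v \<in> comp V F u \<longleftrightarrow> v \<in> V \<and> linked F u v"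
  by (simp add: comp_linked)

lemma in_comp_self: "u \<in> V \<Longrightarrow> u \<in> comp V F u"
  by (simp add: comp_linked)

lemma comp_eq_if_linked: "linked F u v \<Longrightarrow> comp V F u = comp V F v"
  unfolding comp_linked by (metis linked_sym linked_trans)

lemma comp_in_comps: "u \<in> V \<Longrightarrow> comp V F u \<in> comps V F"
  by (simp add: comps_def)

lemma comps_subset: "C \<in> comps V F \<Longrightarrow> C \<subseteq> V"
  unfolding comps_def comp_linked by blast

lemma comps_eq_comp: "C \<in> comps V F \<Longrightarrow> x \<in> C \<Longrightarrow> C = comp V F x"
proof -
  assume "C \<in> comps V F" "x \<in> C"
  then obtain u where "u \<in> V" "C = comp V F u" "linked F u x"
    unfolding comps_def by (auto simp: in_comp_iff)
  then show ?thesis using comp_eq_if_linked by metis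
qed

lemma finite_comps: "finite V \<Longrightarrow> finite (comps V F)"
  by (simp add: comps_def)

lemma comp_mono: "(\<And>u v. linked F u v \<Longrightarrow> linked G u v) \<Longrightarrow> comp V F u \<subseteq> comp V G u"
  by (auto simp: comp_linked)

lemma Union_comp_image_comp:
  assumes "\<And>u v. linked F u v \<Longrightarrow> linked G u v" and "w \<in> V"
  shows "\<Union> (comp V G ` comp V F w) = comp V G w"
proof -
  have "comp V G u = comp V G w" if "u \<in> comp V F w" for u
  proof -
    have "linked G w u" using that assms(1) by (simp add: in_comp_iff)
    then show ?thesis by (rule comp_eq_if_linked[symmetric])
  qed
  moreover have "w \<in> comp V F w" using in_comp_self[OF assms(2)] .
  ultimately have "comp V G ` comp V F w = {comp V G w}" by blast
  then show ?thesis by simp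
qed

lemma in_delta_doubleton:
  assumes "a \<noteq> b" shows "in_delta {a, b} C \<longleftrightarrow> (a \<in> C) \<noteq> (b \<in> C)"
proof -
  have "{a, b} \<inter> C = (if a \<in> C then {a} else {}) \<union> (if b \<in> C then {b} else {})" by auto
  then show ?thesis using assms by (auto simp: in_delta_def)
qed

lemma crossing_doubleton_iff:
  assumes "a \<in> V" "b \<in> V" "a \<noteq> b"
  shows "crossing V F {a, b} \<longleftrightarrow> \<not> linked F a b"
proof
  assume "crossing V F {a, b}"
  then obtain x where "x \<in> V" "in_delta {a, b} (comp V F x)"
    by (auto simp: crossing_def comps_def)
  then show "\<not> linked F a b"
    using assms by (auto simp: in_delta_doubleton[OF assms(3)] in_comp_iff intro: linked_trans linked_sym)
next
  assume "\<not> linked F a b"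
  then have "in_delta {a, b} (comp V F a)"
    using assms by (auto simp: in_delta_doubleton in_comp_iff)
  then show "crossing V F {a, b}"
    using assms by (auto simp: crossing_def intro: comp_in_comps)
qed

lemma grow_rate_doubleton:
  assumes "a \<in> V" "b \<in> V" "a \<noteq> b" "\<not> linked F a b"
  shows "grow_rate V s F th {a, b} =
    of_bool (active s th (comp V F a)) + of_bool (active s th (comp V F b))"
proof -
  let ?Ca = "comp V F a" and ?Cb = "comp V F b"
  have "?Ca \<noteq> ?Cb"
    using assms in_comp_self[OF assms(1), of F] by (auto simp: in_comp_iff)
  moreover have "{C \<in> comps V F. active s th C \<and> in_delta {a, b} C} =
      (if active s th ?Ca then {?Ca} else {}) \<union> (if active s th ?Cb then {?Cb} else {})"
    using assms comps_eq_comp[of _ V F a] comps_eq_comp[of _ V F b]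
    by (auto simp: in_delta_doubleton comp_in_comps in_comp_iff intro: linked_sym)
  ultimately show ?thesis
    unfolding grow_rate_def by auto
qed

lemma load_after_growth:
  assumes "finite V"
  shows "load V (\<lambda>S. if S \<in> comps V F \<and> active s th S then y S + d else y S) e
     = load V y e + d * real (grow_rate V s F th e)"
proof -
  have "load V (\<lambda>S. if S \<in> comps V F \<and> active s th S then y S + d else y S) e
     = (\<Sum>S\<in>Pow V. (if in_delta e S then y S else 0)
          + (if in_delta e S \<and> S \<in> comps V F \<and> active s th S then d else 0))"
    unfolding load_def by (rule sum.cong) auto
  also have "\<dots> = load V y e + (\<Sum>S\<in>{S\<in>Pow V. in_delta e S \<and> S \<in> comps V F \<and> active s th S}. d)"
    unfolding load_def sum.distrib using assms by (simp add: sum.inter_filter[symmetric])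
  also have "{S\<in>Pow V. in_delta e S \<and> S \<in> comps V F \<and> active s th S}
      = {C \<in> comps V F. active s th C \<and> in_delta e C}"
    using comps_subset by auto
  finally show ?thesis by (simp add: grow_rate_def)
qed

section \<open>States of shadow moat growing\<close>

abbreviation forest_of :: "'a mstate \<Rightarrow> 'a set set" where "forest_of X \<equiv> fst X"
abbreviation time_of :: "'a mstate \<Rightarrow> real" where "time_of X \<equiv> fst (snd X)"
abbreviation y_of :: "'a mstate \<Rightarrow> 'a set \<Rightarrow> real" where "y_of X \<equiv> fst (snd (snd X))"
abbreviation base_of :: "'a mstate \<Rightarrow> real" where "base_of X \<equiv> fst (snd (snd (snd X)))"
abbreviation add_of :: "'a mstate \<Rightarrow> real" where "add_of X \<equiv> snd (snd (snd (snd X)))"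

locale moat_instance =
  fixes V :: "'a set" and E :: "'a set set" and c :: "'a set \<Rightarrow> real" and t :: "'a \<Rightarrow> real"
    and pick :: "'a set set \<Rightarrow> 'a set"
  assumes finite_V: "finite V"
    and edges_doubletons: "\<And>e. e \<in> E \<Longrightarrow> e \<subseteq> V \<and> card e = 2"
    and costs_nonneg: "\<And>e. e \<in> E \<Longrightarrow> 0 \<le> c e"
    and pick_in: "\<And>X. X \<noteq> {} \<Longrightarrow> X \<subseteq> E \<Longrightarrow> pick X \<in> X"
begin

abbreviation step :: "('a \<Rightarrow> real) \<Rightarrow> 'a mstate \<Rightarrow> 'a mstate \<Rightarrow> bool" where
  "step s \<equiv> moat_step V E c s t pick"

definition settled :: "'a mstate \<Rightarrow> bool" where
  "settled X \<longleftrightarrow> tight_edges V E c (forest_of X) (y_of X) = {}"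

definition feasible :: "'a mstate \<Rightarrow> bool" where
  "feasible X \<longleftrightarrow> (\<forall>e\<in>E. crossing V (forest_of X) e \<longrightarrow> load V (y_of X) e \<le> c e)"

definition running :: "('a \<Rightarrow> real) \<Rightarrow> 'a mstate \<Rightarrow> bool" where
  "running s X \<longleftrightarrow> (\<exists>w\<in>V. time_of X < s w)"

abbreviation event_set :: "('a \<Rightarrow> real) \<Rightarrow> 'a mstate \<Rightarrow> real set" where
  "event_set s X \<equiv> events V E c s t (forest_of X) (time_of X) (y_of X)"

(* Unspecified (Min of the empty set) once the run has stopped. *)
definition next_event :: "('a \<Rightarrow> real) \<Rightarrow> 'a mstate \<Rightarrow> real" where
  "next_event s X = Min (event_set s X)"

definition grow :: "('a \<Rightarrow> real) \<Rightarrow> 'a mstate \<Rightarrow> real \<Rightarrow> 'a mstate" where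
  "grow s X d = (forest_of X, time_of X + d,
     \<lambda>S. if S \<in> comps V (forest_of X) \<and> active s (time_of X) S then y_of X S + d else y_of X S,
     base_of X + d * real (card {C \<in> comps V (forest_of X). active s (time_of X) C \<and> active t (time_of X) C}),
     add_of X + d * real (card {C \<in> comps V (forest_of X). active s (time_of X) C \<and> \<not> active t (time_of X) C}))"

definition merge_step :: "'a mstate \<Rightarrow> 'a mstate \<Rightarrow> bool" where
  "merge_step X Y \<longleftrightarrow> tight_edges V E c (forest_of X) (y_of X) \<noteq> {} \<and>
     Y = (insert (pick (tight_edges V E c (forest_of X) (y_of X))) (forest_of X), snd X)"

lemma step_iff:
  "step s X Y \<longleftrightarrow> merge_step X Y \<or> (settled X \<and> running s X \<and> Y = grow s X (next_event s X))"
proof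
  assume "step s X Y"
  then show "merge_step X Y \<or> (settled X \<and> running s X \<and> Y = grow s X (next_event s X))"
    by (cases rule: moat_step.cases)
      (auto simp: merge_step_def settled_def running_def grow_def next_event_def cong: if_cong)
next
  assume "merge_step X Y \<or> (settled X \<and> running s X \<and> Y = grow s X (next_event s X))"
  then show "step s X Y"
    by (cases X) (auto simp: merge_step_def settled_def running_def grow_def next_event_def
        intro: moat_step.intros cong: if_cong)
qed

lemma step_from_settled: "settled X \<Longrightarrow> step s X Y \<Longrightarrow> Y = grow s X (next_event s X)"
  by (auto simp: step_iff merge_step_def settled_def)

lemma final_iff: "moat_final V E c s X \<longleftrightarrow> settled X \<and> \<not> running s X"
  by (cases X) (simp add: moat_final_def settled_def running_def)

lemma final_relpowp:
  assumes "(step s ^^ n) X Y" "moat_final V E c s X"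
  shows "n = 0 \<and> Y = X"
proof (cases n)
  case (Suc m)
  then obtain Z where "step s X Z" using assms(1) by (metis relpowp_Suc_E2)
  then show ?thesis using assms(2) by (auto simp: step_iff final_iff merge_step_def settled_def)
qed (use assms in simp)

lemma finite_E: "finite E"
  using edges_doubletons by (blast intro: rev_finite_subset[of "Pow V"] finite_V)

lemma edge_doubletonE:
  assumes "e \<in> E" obtains a b where "e = {a, b}" "a \<noteq> b" "a \<in> V" "b \<in> V"
  using edges_doubletons[OF assms] by (auto simp: card_2_iff)

lemma finite_event_set: "finite (event_set s X)"
  unfolding events_def
  by (intro finite_UnI finite_image_set) (auto intro: rev_finite_subset[OF finite_V] rev_finite_subset[OF finite_E])

lemma threshold_in_event_set:
  "w \<in> V \<Longrightarrow> time_of X < f w \<Longrightarrow> f = s \<or> f = t \<Longrightarrow> f w - time_of X \<in> event_set s X"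
  unfolding events_def by blast

lemma edge_in_event_set:
  "e \<in> E \<Longrightarrow> crossing V (forest_of X) e \<Longrightarrow> 0 < grow_rate V s (forest_of X) (time_of X) e \<Longrightarrow>
   (c e - load V (y_of X) e) / grow_rate V s (forest_of X) (time_of X) e \<in> event_set s X"
  unfolding events_def by blast

lemma next_event_le: "x \<in> event_set s X \<Longrightarrow> next_event s X \<le> x"
  unfolding next_event_def using finite_event_set by simp

lemma next_event_pos:
  assumes "settled X" "feasible X" "running s X"
  shows "0 < next_event s X"
proof -
  have pos: "0 < x" if "x \<in> event_set s X" for x
    using that unfolding events_def
  proof (elim UnE CollectE exE conjE)
    fix e assume e: "x = (c e - load V (y_of X) e) / grow_rate V s (forest_of X) (time_of X) e"
      "e \<in> E" "crossing V (forest_of X) e" "0 < grow_rate V s (forest_of X) (time_of X) e"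
    have "load V (y_of X) e < c e"
      using assms(1,2) e(2,3) by (force simp: settled_def feasible_def tight_edges_def)
    then show ?thesis using e(1,4) by simp
  qed auto
  obtain w where "w \<in> V" "time_of X < s w" using assms(3) by (auto simp: running_def)
  then have "event_set s X \<noteq> {}" using threshold_in_event_set by blast
  then show ?thesis unfolding next_event_def using finite_event_set pos by simp
qed

lemma slack_bound:
  assumes "e \<in> E" "crossing V (forest_of X) e" "0 < grow_rate V s (forest_of X) (time_of X) e"
  shows "next_event s X * grow_rate V s (forest_of X) (time_of X) e \<le> c e - load V (y_of X) e"
  using next_event_le[OF edge_in_event_set[OF assms]] assms(3) by (simp add: le_divide_eq)

lemma grow_simps [simp]:
  "forest_of (grow s X d) = forest_of X"
  "time_of (grow s X d) = time_of X + d"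
  "add_of (grow s X d) = add_of X
     + d * card {C \<in> comps V (forest_of X). active s (time_of X) C \<and> \<not> active t (time_of X) C}"
  by (simp_all add: grow_def)

lemma load_grow:
  "load V (y_of (grow s X d)) e = load V (y_of X) e + d * grow_rate V s (forest_of X) (time_of X) e"
  using load_after_growth[OF finite_V] by (simp add: grow_def)

lemma running_if_grow_rate_pos:
  assumes "0 < grow_rate V s (forest_of X) (time_of X) e"
  shows "running s X"
proof -
  have "{C \<in> comps V (forest_of X). active s (time_of X) C \<and> in_delta e C} \<noteq> {}"
    using assms unfolding grow_rate_def by (metis card.empty less_irrefl)
  then show ?thesis using comps_subset unfolding running_def active_def by blast
qed

lemma grow_feasible:
  assumes "feasible X" "0 \<le> r" "running s X \<Longrightarrow> r \<le> next_event s X"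
  shows "feasible (grow s X r)"
  unfolding feasible_def
proof (intro ballI impI)
  fix e assume e: "e \<in> E" "crossing V (forest_of (grow s X r)) e"
  let ?g = "grow_rate V s (forest_of X) (time_of X) e"
  have "r * ?g \<le> c e - load V (y_of X) e"
  proof (cases "0 < ?g")
    case True
    then have "r * ?g \<le> next_event s X * ?g"
      using assms(3)[OF running_if_grow_rate_pos[OF True]] by (intro mult_right_mono) auto
    also have "\<dots> \<le> c e - load V (y_of X) e" using slack_bound[of e X s] e True by simp
    finally show ?thesis .
  next
    case False
    then show ?thesis using assms(1) e by (simp add: feasible_def)
  qed
  then show "load V (y_of (grow s X r)) e \<le> c e" by (simp add: load_grow)
qed

lemma grow_settled:
  assumes "settled X" "0 \<le> r" "running s X \<Longrightarrow> r < next_event s X"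
  shows "settled (grow s X r)"
  unfolding settled_def
proof (rule equals0I)
  fix e assume "e \<in> tight_edges V E c (forest_of (grow s X r)) (y_of (grow s X r))"
  then have e: "e \<in> E" "crossing V (forest_of X) e" "load V (y_of (grow s X r)) e = c e"
    by (auto simp: tight_edges_def)
  let ?g = "grow_rate V s (forest_of X) (time_of X) e"
  have not_tight: "load V (y_of X) e \<noteq> c e"
    using assms(1) e by (auto simp: settled_def tight_edges_def)
  show False
  proof (cases "0 < ?g")
    case True
    then have "r * ?g < next_event s X * ?g"
      using assms(3)[OF running_if_grow_rate_pos[OF True]] by (intro mult_strict_right_mono) auto
    also have "\<dots> \<le> c e - load V (y_of X) e" using slack_bound e True by blast
    finally show False using e(3) by (simp add: load_grow)
  next
    case False
    then show False using not_tight e(3) by (simp add: load_grow)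
  qed
qed

lemma grow_stopped:
  assumes "\<not> running s X" "0 \<le> r"
  shows "y_of (grow s X r) = y_of X" "add_of (grow s X r) = add_of X" "\<not> running s (grow s X r)"
proof -
  have inactive: "\<not> active s (time_of X) C" if "C \<in> comps V (forest_of X)" for C
    using assms(1) comps_subset[OF that] unfolding running_def active_def by blast
  then show "y_of (grow s X r) = y_of X" by (auto simp: grow_def fun_eq_iff)
  have "{C \<in> comps V (forest_of X). active s (time_of X) C \<and> \<not> active t (time_of X) C} = {}"
    using inactive by blast
  then show "add_of (grow s X r) = add_of X" by (simp only: grow_simps card.empty)
  show "\<not> running s (grow s X r)" using assms unfolding running_def by auto
qed

lemma threshold_stable:
  assumes "0 \<le> r" "r < next_event s X" "w \<in> V" "f = s \<or> f = t"
  shows "time_of X + r < f w \<longleftrightarrow> time_of X < f w"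
proof
  assume "time_of X < f w"
  then have "next_event s X \<le> f w - time_of X"
    using threshold_in_event_set[OF assms(3) _ assms(4)] next_event_le by blast
  then show "time_of X + r < f w" using assms(2) by linarith
qed (use assms(1) in linarith)

lemma activity_stable:
  assumes "0 \<le> r" "r < next_event s X" "C \<in> comps V F"
  shows "active s (time_of X + r) C = active s (time_of X) C"
    and "active t (time_of X + r) C = active t (time_of X) C"
  using threshold_stable[OF assms(1,2)] comps_subset[OF assms(3)] unfolding active_def by blast+

lemma grow_grow:
  assumes "0 \<le> r" "r < next_event s X"
  shows "grow s (grow s X r) d = grow s X (r + d)"
proof -
  note stable = activity_stable[OF assms]
  have "{C \<in> comps V (forest_of X). active s (time_of X + r) C \<and> active t (time_of X + r) C}
      = {C \<in> comps V (forest_of X). active s (time_of X) C \<and> active t (time_of X) C}"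
    "{C \<in> comps V (forest_of X). active s (time_of X + r) C \<and> \<not> active t (time_of X + r) C}
      = {C \<in> comps V (forest_of X). active s (time_of X) C \<and> \<not> active t (time_of X) C}"
    using stable by auto
  then show ?thesis using stable(1) by (auto simp: grow_def algebra_simps fun_eq_iff)
qed

lemma image_minus_Setcompr: "(\<lambda>x. x - r) ` {f e | e. P e} = {f e - r | e. P e}"
  by blast

lemma event_set_grow:
  assumes "0 \<le> r" "r < next_event s X"
  shows "event_set s (grow s X r) = (\<lambda>x. x - r) ` event_set s X"
proof -
  let ?F = "forest_of X" and ?T = "time_of X"
  note thr = threshold_stable[OF assms]
  have rate: "grow_rate V s ?F (?T + r) = grow_rate V s ?F ?T"
    using activity_stable(1)[OF assms] unfolding grow_rate_def by (intro ext) (metis (no_types, lifting))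
  have "{s w - (?T + r) | w. w \<in> V \<and> ?T + r < s w} = {s w - ?T - r | w. w \<in> V \<and> ?T < s w}"
    "{t w - (?T + r) | w. w \<in> V \<and> ?T + r < t w} = {t w - ?T - r | w. w \<in> V \<and> ?T < t w}"
    using thr by (auto simp: algebra_simps)
  moreover have "{(c e - load V (y_of (grow s X r)) e) / grow_rate V s ?F (?T + r) e | e.
        e \<in> E \<and> crossing V ?F e \<and> 0 < grow_rate V s ?F (?T + r) e}
      = {(c e - load V (y_of X) e) / grow_rate V s ?F ?T e - r | e.
        e \<in> E \<and> crossing V ?F e \<and> 0 < grow_rate V s ?F ?T e}"
  proof -
    have "(c e - load V (y_of (grow s X r)) e) / grow_rate V s ?F ?T e
        = (c e - load V (y_of X) e) / grow_rate V s ?F ?T e - r" if "0 < grow_rate V s ?F ?T e" for e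
      using that by (simp add: load_grow diff_divide_distrib add_divide_distrib)
    then show ?thesis unfolding rate by (intro Collect_cong ex_cong1) auto
  qed
  ultimately show ?thesis
    unfolding events_def image_Un image_minus_Setcompr by simp
qed

lemma next_event_grow:
  assumes "running s X" "0 \<le> r" "r < next_event s X"
  shows "next_event s (grow s X r) = next_event s X - r"
proof -
  obtain w where "w \<in> V" "time_of X < s w" using assms(1) by (auto simp: running_def)
  then have "event_set s X \<noteq> {}" using threshold_in_event_set by blast
  then show ?thesis
    unfolding next_event_def event_set_grow[OF assms(2,3)]
    by (simp add: mono_Min_commute[symmetric] finite_event_set mono_def)
qed

lemma step_after_partial_growth:
  assumes "settled X" "running s X" "0 \<le> r" "r < next_event s X"
  shows "step s (grow s X r) (grow s X (next_event s X))"
proof -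
  have "settled (grow s X r)" using grow_settled assms by blast
  moreover have "running s (grow s X r)"
    using assms(2) threshold_stable[OF assms(3,4)] by (auto simp: running_def)
  moreover have "grow s (grow s X r) (next_event s (grow s X r)) = grow s X (next_event s X)"
    using grow_grow[OF assms(3,4)] next_event_grow[OF assms(2-4)] by simp
  ultimately show ?thesis unfolding step_iff by simp
qed

lemma crossing_antimono:
  assumes "e \<in> E" "F \<subseteq> G" "crossing V G e"
  shows "crossing V F e"
proof -
  obtain a b where "e = {a, b}" "a \<noteq> b" "a \<in> V" "b \<in> V" using edge_doubletonE[OF assms(1)] .
  then show ?thesis using assms(3) by (auto simp: crossing_doubleton_iff dest: linked_mono[OF assms(2)])
qed

lemma merges_add_tight_edges:
  assumes "merge_step\<^sup>*\<^sup>* X Y"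
  shows "snd Y = snd X \<and> forest_of X \<subseteq> forest_of Y \<and>
    (\<forall>e \<in> forest_of Y - forest_of X. e \<in> E \<and> load V (y_of X) e = c e)"
  using assms
proof (induction rule: rtranclp_induct)
  case (step Y Z)
  let ?T = "tight_edges V E c (forest_of Y) (y_of Y)"
  have "pick ?T \<in> ?T" using step(2) pick_in[of ?T] by (auto simp: merge_step_def tight_edges_def)
  then show ?case using step(2,3) by (auto simp: merge_step_def tight_edges_def)
qed simp

lemma merges_feasible:
  assumes "merge_step\<^sup>*\<^sup>* X Y" "feasible X"
  shows "feasible Y"
  using merges_add_tight_edges[OF assms(1)] assms(2) crossing_antimono
  unfolding feasible_def by (metis (no_types, lifting))

lemma run_reaches_settled:
  assumes "(step s ^^ n) X Z" "moat_final V E c s Z"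
  shows "\<exists>X' m. merge_step\<^sup>*\<^sup>* X X' \<and> settled X' \<and> (step s ^^ m) X' Z \<and> m \<le> n"
  using assms(1)
proof (induction n arbitrary: X)
  case 0
  then show ?case using assms(2) unfolding final_iff by (intro exI[of _ X] exI[of _ 0]) auto
next
  case (Suc n)
  show ?case
  proof (cases "settled X")
    case True
    then show ?thesis using Suc.prems by blast
  next
    case False
    obtain X1 where X1: "step s X X1" "(step s ^^ n) X1 Z" using Suc.prems by (metis relpowp_Suc_E2)
    then have "merge_step X X1" using False by (simp add: step_iff)
    moreover obtain X' m where "merge_step\<^sup>*\<^sup>* X1 X'" "settled X'" "(step s ^^ m) X' Z" "m \<le> n"
      using Suc.IH[OF X1(2)] by blast
    ultimately show ?thesis by (meson converse_rtranclp_into_rtranclp le_SucI)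
  qed
qed

lemma run_after_growth:
  assumes "settled X" "(step s ^^ n) X Z" "moat_final V E c s Z"
    and "0 \<le> r" "running s X \<Longrightarrow> r \<le> next_event s X"
  obtains X' m Z' where "merge_step\<^sup>*\<^sup>* (grow s X r) X'" "settled X'" "(step s ^^ m) X' Z'"
    "moat_final V E c s Z'" "add_of Z' = add_of Z" "m \<le> n"
    "running s X \<Longrightarrow> r = next_event s X \<Longrightarrow> m < n"
proof (cases "running s X")
  case False
  then have "Z = X" using final_relpowp[OF assms(2)] assms(1) by (simp add: final_iff)
  moreover have "settled (grow s X r)" using grow_settled assms(1,4) False by blast
  ultimately show ?thesis
    using that[of "grow s X r" 0 "grow s X r"] grow_stopped[OF False assms(4)] False
    by (simp add: final_iff)
next
  case True
  have "n \<noteq> 0" using assms(2,3) True by (cases n) (auto simp: final_iff)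
  then obtain n' where n: "n = Suc n'" using not0_implies_Suc by blast
  then obtain X1 where X1: "step s X X1" "(step s ^^ n') X1 Z"
    using assms(2) by (metis relpowp_Suc_E2)
  have X1_eq: "X1 = grow s X (next_event s X)" using step_from_settled[OF assms(1) X1(1)] .
  show ?thesis
  proof (cases "r < next_event s X")
    case True
    have "(step s ^^ n) (grow s X r) Z"
      using step_after_partial_growth[OF assms(1) \<open>running s X\<close> assms(4) True] X1(2) n X1_eq
      by (metis relpowp_Suc_I2)
    then show ?thesis using that grow_settled[OF assms(1,4)] True assms(3) by blast
  next
    case False
    then have "r = next_event s X" using assms(5) True by simp
    moreover obtain X' m where "merge_step\<^sup>*\<^sup>* X1 X'" "settled X'" "(step s ^^ m) X' Z" "m \<le> n'"
      using run_reaches_settled[OF X1(2) assms(3)] by blast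
    ultimately show ?thesis using that[of X' m Z] X1_eq n assms(3) by simp
  qed
qed

lemma common_growth_length:
  assumes "settled A" "feasible A" "settled B" "feasible B" "running s A \<or> running s' B"
  obtains r where "0 \<le> r" "running s A \<Longrightarrow> r \<le> next_event s A" "running s' B \<Longrightarrow> r \<le> next_event s' B"
    "(running s A \<and> r = next_event s A) \<or> (running s' B \<and> r = next_event s' B)"
proof -
  define r where "r = (if running s A \<and> running s' B then min (next_event s A) (next_event s' B)
    else if running s A then next_event s A else next_event s' B)"
  have "0 \<le> r"
    using next_event_pos[OF assms(1,2), of s] next_event_pos[OF assms(3,4), of s'] assms(5)
    unfolding r_def by (auto intro: order_less_imp_le)
  moreover have "running s A \<Longrightarrow> r \<le> next_event s A" "running s' B \<Longrightarrow> r \<le> next_event s' B"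
    "(running s A \<and> r = next_event s A) \<or> (running s' B \<and> r = next_event s' B)"
    using assms(5) unfolding r_def by auto
  ultimately show ?thesis using that by blast
qed

end

section \<open>Coupling a run with its boosted run\<close>

locale boosting = moat_instance +
  fixes ts :: "'a \<Rightarrow> real" and q :: 'a and tau :: real
  assumes q_in_V: "q \<in> V" and boost_ge: "ts q \<le> tau" and tau_nonneg: "0 \<le> tau"
begin

abbreviation boosted :: "'a \<Rightarrow> real" where
  "boosted \<equiv> ts(q := tau)"

lemma le_boosted: "ts w \<le> boosted w"
  using boost_ge by simp

lemma add_components_boosted_le:
  assumes refines: "\<And>u v. linked F u v \<Longrightarrow> linked F' u v"
  shows "card {C' \<in> comps V F'. active boosted th C' \<and> \<not> active t th C'}
     \<le> card {C \<in> comps V F. active ts th C \<and> \<not> active t th C} + of_bool (th < tau)"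
proof -
  let ?S' = "{C' \<in> comps V F'. active boosted th C' \<and> \<not> active t th C'}"
  let ?S = "{C \<in> comps V F. active ts th C \<and> \<not> active t th C}"
  let ?lift = "\<lambda>C. \<Union> (comp V F' ` C)"
  let ?Q = "if th < tau then {comp V F' q} else {}"
  have "?S' \<subseteq> ?lift ` ?S \<union> ?Q"
  proof
    fix C' assume C': "C' \<in> ?S'"
    then obtain w where w: "w \<in> C'" "th < boosted w" unfolding active_def by blast
    have C'_comp: "C' \<in> comps V F'" using C' by simp
    have wV: "w \<in> V" using comps_subset[OF C'_comp] w(1) ..
    have C'_eq: "C' = comp V F' w" using comps_eq_comp[OF C'_comp w(1)] .
    show "C' \<in> ?lift ` ?S \<union> ?Q"
    proof (cases "w = q")
      case True
      then show ?thesis using w(2) C'_eq by simp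
    next
      case False
      have "comp V F w \<subseteq> C'" using comp_mono[OF refines] C'_eq by blast
      then have "comp V F w \<in> ?S"
        using C' w False in_comp_self[OF wV] comp_in_comps[OF wV] by (auto simp: active_def)
      moreover have "?lift (comp V F w) = C'" using Union_comp_image_comp[OF refines wV] C'_eq by simp
      ultimately show ?thesis by blast
    qed
  qed
  moreover have "finite ?S" using finite_comps[OF finite_V] by simp
  ultimately have "card ?S' \<le> card (?lift ` ?S \<union> ?Q)" by (intro card_mono) auto
  also have "\<dots> \<le> card (?lift ` ?S) + card ?Q" by (rule card_Un_le)
  also have "\<dots> \<le> card ?S + card ?Q" using card_image_le[OF \<open>finite ?S\<close>] by simp
  finally show ?thesis by (cases "th < tau") auto
qed

lemma grow_rate_boosted_ge:
  assumes refines: "\<And>u v. linked F u v \<Longrightarrow> linked F' u v" and "e \<in> E" "crossing V F' e"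
  shows "grow_rate V ts F th e \<le> grow_rate V boosted F' th e"
proof -
  obtain a b where ab: "e = {a, b}" "a \<noteq> b" "a \<in> V" "b \<in> V" using edge_doubletonE[OF assms(2)] .
  have apart': "\<not> linked F' a b" using assms(3) ab by (simp add: crossing_doubleton_iff)
  then have apart: "\<not> linked F a b" using refines by blast
  have active_mono: "active boosted th (comp V F' x)" if "active ts th (comp V F x)" for x
  proof -
    have "comp V F x \<subseteq> comp V F' x" by (rule comp_mono[OF refines])
    then show ?thesis using that le_boosted unfolding active_def by (meson order_less_le_trans subsetD)
  qed
  show ?thesis
    unfolding ab(1) grow_rate_doubleton[OF ab(3,4,2) apart] grow_rate_doubleton[OF ab(3,4,2) apart']
    using active_mono[of a] active_mono[of b] by (auto simp: of_bool_def)
qed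

(* A is a state of the run on ts, B one of the run on the boosted thresholds. *)
definition coupled :: "'a mstate \<Rightarrow> 'a mstate \<Rightarrow> bool" where
  "coupled A B \<longleftrightarrow> time_of A = time_of B
     \<and> (\<forall>u v. linked (forest_of A) u v \<longrightarrow> linked (forest_of B) u v)
     \<and> (\<forall>e\<in>E. crossing V (forest_of B) e \<longrightarrow> load V (y_of A) e \<le> load V (y_of B) e)
     \<and> add_of B - add_of A \<le> min (time_of A) tau \<and> feasible A \<and> feasible B"

lemma coupled_start: "coupled ({}, 0, \<lambda>_. 0, 0, 0) ({}, 0, \<lambda>_. 0, 0, 0)"
  using costs_nonneg tau_nonneg by (simp add: coupled_def feasible_def load_def)

lemma tight_edge_linked_after_merges:
  assumes "feasible B" "merge_step\<^sup>*\<^sup>* B B'" "settled B'"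
    and "{x, y} \<in> E" "c {x, y} \<le> load V y' {x, y}"
    and "crossing V (forest_of B) {x, y} \<Longrightarrow> load V y' {x, y} \<le> load V (y_of B) {x, y}"
  shows "linked (forest_of B') x y"
proof (rule ccontr)
  assume "\<not> linked (forest_of B') x y"
  obtain a b where "{x, y} = {a, b}" "a \<noteq> b" "a \<in> V" "b \<in> V" using edge_doubletonE[OF assms(4)] .
  then have "x \<noteq> y" "x \<in> V" "y \<in> V" by (auto simp: doubleton_eq_iff)
  then have cross': "crossing V (forest_of B') {x, y}"
    using \<open>\<not> linked (forest_of B') x y\<close> by (simp add: crossing_doubleton_iff)
  have B': "snd B' = snd B" "forest_of B \<subseteq> forest_of B'"
    using merges_add_tight_edges[OF assms(2)] by auto
  then have "crossing V (forest_of B) {x, y}" using crossing_antimono assms(4) cross' by blast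
  then have "load V (y_of B) {x, y} = c {x, y}" using assms(1,4,5,6) by (force simp: feasible_def)
  then have "{x, y} \<in> tight_edges V E c (forest_of B') (y_of B')"
    using cross' assms(4) B'(1) by (simp add: tight_edges_def)
  then show False using assms(3) by (simp add: settled_def)
qed

lemma coupled_merges:
  assumes "coupled A B" "merge_step\<^sup>*\<^sup>* A A'" "merge_step\<^sup>*\<^sup>* B B'" "settled B'"
  shows "coupled A' B'"
proof -
  have A': "snd A' = snd A" and new_tight: "\<And>e. e \<in> forest_of A' - forest_of A \<Longrightarrow> e \<in> E \<and> load V (y_of A) e = c e"
    using merges_add_tight_edges[OF assms(2)] by auto
  have B': "snd B' = snd B" "forest_of B \<subseteq> forest_of B'"
    using merges_add_tight_edges[OF assms(3)] by auto
  have edge: "linked (forest_of B') x y" if "{x, y} \<in> forest_of A'" for x y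
  proof (cases "{x, y} \<in> forest_of A")
    case True
    then have "linked (forest_of B) x y" using assms(1) linked_edge[OF True] by (auto simp: coupled_def)
    then show ?thesis using linked_mono[OF B'(2)] by blast
  next
    case False
    then have e: "{x, y} \<in> E" "load V (y_of A) {x, y} = c {x, y}" using new_tight that by auto
    show ?thesis
    proof (rule tight_edge_linked_after_merges[OF _ assms(3,4) e(1)])
      show "feasible B" using assms(1) by (simp add: coupled_def)
      show "c {x, y} \<le> load V (y_of A) {x, y}" using e(2) by simp
      show "load V (y_of A) {x, y} \<le> load V (y_of B) {x, y}" if "crossing V (forest_of B) {x, y}"
        using that e(1) assms(1) by (simp add: coupled_def)
    qed
  qed
  have "linked (forest_of B') u v" if "linked (forest_of A') u v" for u v
    using linked_if_edges_linked[OF edge that] .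
  moreover have "crossing V (forest_of B) e" if "e \<in> E" "crossing V (forest_of B') e" for e
    using crossing_antimono[OF that(1) B'(2) that(2)] .
  ultimately show ?thesis
    using assms(1) A' B'(1) merges_feasible[OF assms(2)] merges_feasible[OF assms(3)]
    by (auto simp: coupled_def)
qed

lemma add_gap_grow:
  assumes "coupled A B" "0 \<le> r" "running boosted B \<Longrightarrow> r \<le> next_event boosted B"
  shows "add_of (grow boosted B r) - add_of (grow ts A r) \<le> min (time_of A + r) tau"
proof -
  let ?th = "time_of A"
  let ?kA = "card {C \<in> comps V (forest_of A). active ts ?th C \<and> \<not> active t ?th C}"
  let ?kB = "card {C \<in> comps V (forest_of B). active boosted ?th C \<and> \<not> active t ?th C}"
  have gap: "add_of B - add_of A \<le> min ?th tau" and T: "time_of B = ?th"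
    using assms(1) by (auto simp: coupled_def)
  have k: "?kB \<le> ?kA + of_bool (?th < tau)"
    using add_components_boosted_le[where F = "forest_of A" and F' = "forest_of B" and th = ?th] assms(1)
    by (auto simp: coupled_def)
  have grown: "add_of (grow boosted B r) - add_of (grow ts A r)
      = add_of B - add_of A + r * (real ?kB - real ?kA)"
    using T by (simp add: algebra_simps)
  show ?thesis
  proof (cases "?th < tau")
    case True
    have "boosted q - time_of B \<in> event_set boosted B"
      by (rule threshold_in_event_set[OF q_in_V]) (use True T in auto)
    moreover have "running boosted B" using q_in_V True T by (auto simp: running_def)
    ultimately have "r \<le> tau - ?th" using assms(3) next_event_le T by fastforce
    moreover have "r * (real ?kB - real ?kA) \<le> r * 1"
      using k True assms(2) by (intro mult_left_mono) auto
    moreover have "min ?th tau = ?th" "min (?th + r) tau = ?th + r"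
      using True \<open>r \<le> tau - ?th\<close> by auto
    ultimately show ?thesis unfolding grown using gap by linarith
  next
    case False
    have "r * (real ?kB - real ?kA) \<le> r * 0"
      using k False assms(2) by (intro mult_left_mono) auto
    moreover have "min ?th tau = tau" "min (?th + r) tau = tau" using False assms(2) by auto
    ultimately show ?thesis unfolding grown using gap by linarith
  qed
qed

lemma coupled_grow:
  assumes "coupled A B" "0 \<le> r"
    and "running ts A \<Longrightarrow> r \<le> next_event ts A" "running boosted B \<Longrightarrow> r \<le> next_event boosted B"
  shows "coupled (grow ts A r) (grow boosted B r)"
proof -
  have T: "time_of A = time_of B"
    and refines: "\<And>u v. linked (forest_of A) u v \<Longrightarrow> linked (forest_of B) u v"
    and loads: "\<And>e. e \<in> E \<Longrightarrow> crossing V (forest_of B) e \<Longrightarrow> load V (y_of A) e \<le> load V (y_of B) e"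
    and "feasible A" "feasible B"
    using assms(1) by (auto simp: coupled_def)
  have "load V (y_of (grow ts A r)) e \<le> load V (y_of (grow boosted B r)) e"
    if "e \<in> E" "crossing V (forest_of B) e" for e
  proof -
    have "r * grow_rate V ts (forest_of A) (time_of A) e \<le> r * grow_rate V boosted (forest_of B) (time_of B) e"
      using grow_rate_boosted_ge[OF refines that] T assms(2) by (simp add: mult_left_mono)
    then show ?thesis using loads[OF that] by (simp add: load_grow)
  qed
  then show ?thesis
    using T refines add_gap_grow[OF assms(1,2,4)]
      grow_feasible[OF \<open>feasible A\<close> assms(2,3)] grow_feasible[OF \<open>feasible B\<close> assms(2,4)]
    by (simp add: coupled_def)
qed

lemma coupled_runs_add_gap:
  assumes "coupled A B" "settled A" "settled B"
    and "(step ts ^^ nA) A ZA" "moat_final V E c ts ZA"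
    and "(step boosted ^^ nB) B ZB" "moat_final V E c boosted ZB"
  shows "add_of ZB - add_of ZA \<le> tau"
  using assms
proof (induction "nA + nB" arbitrary: A B nA nB ZA ZB rule: less_induct)
  case less
  have feasible: "feasible A" "feasible B" using less.prems(1) by (auto simp: coupled_def)
  show ?case
  proof (cases "running ts A \<or> running boosted B")
    case False
    then have "ZA = A" "ZB = B"
      using final_relpowp[OF less.prems(4)] final_relpowp[OF less.prems(6)] less.prems(2,3)
      by (auto simp: final_iff)
    then show ?thesis using less.prems(1) by (auto simp: coupled_def)
  next
    case True
    obtain r where r_nonneg: "0 \<le> r" and r_A: "running ts A \<Longrightarrow> r \<le> next_event ts A"
      and r_B: "running boosted B \<Longrightarrow> r \<le> next_event boosted B"
      and r_hits: "(running ts A \<and> r = next_event ts A) \<or> (running boosted B \<and> r = next_event boosted B)"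
      using common_growth_length[OF less.prems(2) feasible(1) less.prems(3) feasible(2) True] by blast
    obtain A' mA ZA' where A': "merge_step\<^sup>*\<^sup>* (grow ts A r) A'" "settled A'" "(step ts ^^ mA) A' ZA'"
      "moat_final V E c ts ZA'" "add_of ZA' = add_of ZA" "mA \<le> nA"
      "running ts A \<Longrightarrow> r = next_event ts A \<Longrightarrow> mA < nA"
      using run_after_growth[OF less.prems(2,4,5) r_nonneg r_A] by blast
    obtain B' mB ZB' where B': "merge_step\<^sup>*\<^sup>* (grow boosted B r) B'" "settled B'"
      "(step boosted ^^ mB) B' ZB'" "moat_final V E c boosted ZB'" "add_of ZB' = add_of ZB" "mB \<le> nB"
      "running boosted B \<Longrightarrow> r = next_event boosted B \<Longrightarrow> mB < nB"
      using run_after_growth[OF less.prems(3,6,7) r_nonneg r_B] by blast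
    have "mA + mB < nA + nB" using A'(6,7) B'(6,7) r_hits by fastforce
    moreover have "coupled A' B'"
      using coupled_merges[OF coupled_grow[OF less.prems(1) r_nonneg r_A r_B] A'(1) B'(1,2)] .
    ultimately have "add_of ZB' - add_of ZA' \<le> tau"
      using less.hyps A'(2-4) B'(2-4) by blast
    then show ?thesis using A'(5) B'(5) by simp
  qed
qed

theorem loss_le_boost:
  assumes "moat_outcome V E c ts t pick yb ya" "moat_outcome V E c boosted t pick yb' ya'"
  shows "ya' - ya \<le> tau"
proof -
  define Z :: "'a mstate" where "Z = ({}, 0, \<lambda>_. 0, 0, 0)"
  obtain ZA nA where A: "(step ts ^^ nA) Z ZA" "moat_final V E c ts ZA" "add_of ZA = ya"
    using assms(1) rtranclp_imp_relpowp unfolding moat_outcome_def Z_def by fastforce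
  obtain ZB nB where B: "(step boosted ^^ nB) Z ZB" "moat_final V E c boosted ZB" "add_of ZB = ya'"
    using assms(2) rtranclp_imp_relpowp unfolding moat_outcome_def Z_def by fastforce
  obtain A mA where "merge_step\<^sup>*\<^sup>* Z A" "settled A" "(step ts ^^ mA) A ZA"
    using run_reaches_settled[OF A(1,2)] by blast
  moreover obtain B mB where "merge_step\<^sup>*\<^sup>* Z B" "settled B" "(step boosted ^^ mB) B ZB"
    using run_reaches_settled[OF B(1,2)] by blast
  ultimately show ?thesis
    using coupled_merges[OF coupled_start[folded Z_def]] coupled_runs_add_gap A(2,3) B(2,3) by blast
qed

end

theorem mainTheorem14:
  fixes V :: "'a set" and E :: "'a set set" and c :: "'a set \<Rightarrow> real"
    and t ts :: "'a \<Rightarrow> real" and pick :: "'a set set \<Rightarrow> 'a set"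
    and q :: 'a and tau :: real and yb ya yb' ya' :: real
  assumes "finite V"
    and "\<forall>e\<in>E. e \<subseteq> V \<and> card e = 2"
    and "\<forall>e\<in>E. c e \<ge> 0"
    and "\<forall>v\<in>V. 0 \<le> t v \<and> t v \<le> ts v"
    and "\<forall>X. X \<noteq> {} \<and> X \<subseteq> E \<longrightarrow> pick X \<in> X"
    and "q \<in> V" and "ts q \<le> tau"
    and "moat_outcome V E c ts t pick yb ya"
    and "moat_outcome V E c (ts(q := tau)) t pick yb' ya'"
  shows "ya' - ya \<le> tau"
proof -
  have "0 \<le> tau" using assms(4,6,7) by force
  then interpret boosting V E c t pick ts q tau
    using assms(1-3,5-7) by unfold_locales auto
  show ?thesis using loss_le_boost assms(8,9) by blast
qed

end
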